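(* Assume $\gamma=0$ and that $r$ is not a root of unity. Let $I$ be a two-sided ideal of $L$, $x\in I$, and $x=\sum_{i\in\mathbb Z}x_i$ ($x_i\in L_i$) its homogeneous decomposition, with length $\ell(x)=\#\{i: x_i\neq0\}\ge1$. Then $x_ih^{\ell(x)-1}\in I$ for all $i\in\mathbb Z$.
   Context: Let $r,s\in\mathbb C^\times$ and $\phi\in\mathbb C[x]$; $L=L(\phi,r,s,0)$ is the associative $\mathbb C$-algebra generated by $u,d,h$ subject to $hu=ruh$, $dh=rhd$, $du-sud=\phi(h)$. $L$ is $\mathbb Z$-graded by $\deg u=1,\deg d=-1,\deg h=0$, and $L_i$ is the degree-$i$ component (so $hx_i=r^ix_ih$ for $x_i\in L_i$). *)

theory Defs
  imports Complex_Main "HOL-Computational_Algebra.Polynomial"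
begin

text \<open>The algebra L(phi,r,s,0) is realised as the free associative C-algebra
on u,d,h (finitely supported functions on words) modulo the two-sided ideal
generated by the defining relations.  Ideals of L correspond to ideals of the
free algebra containing that relation ideal.\<close>

datatype gen = U | D | H

type_synonym falg = "gen list \<Rightarrow> complex"

definition fa :: "falg set" where
  "fa = {f. finite {w. f w \<noteq> 0}}"

definition fadd :: "falg \<Rightarrow> falg \<Rightarrow> falg" where
  "fadd f g = (\<lambda>w. f w + g w)"

definition fsmul :: "complex \<Rightarrow> falg \<Rightarrow> falg" where
  "fsmul c f = (\<lambda>w. c * f w)"

definition fsub :: "falg \<Rightarrow> falg \<Rightarrow> falg" where
  "fsub f g = (\<lambda>w. f w - g w)"

text \<open>Multiplication: concatenation of words, extended bilinearly.\<close>
definition fmul :: "falg \<Rightarrow> falg \<Rightarrow> falg" where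
  "fmul f g = (\<lambda>w. \<Sum>k\<le>length w. f (take k w) * g (drop k w))"

definition word :: "gen list \<Rightarrow> falg" where
  "word w = (\<lambda>v. if v = w then 1 else 0)"

definition hpow :: "nat \<Rightarrow> falg" where
  "hpow n = word (replicate n H)"

definition phiH :: "complex poly \<Rightarrow> falg" where
  "phiH p = (\<lambda>w. if w = replicate (length w) H then coeff p (length w) else 0)"

definition is_ideal :: "falg set \<Rightarrow> bool" where
  "is_ideal J \<longleftrightarrow> J \<subseteq> fa \<and> (\<lambda>_. 0) \<in> J \<and> (\<forall>a\<in>J. \<forall>b\<in>J. fadd a b \<in> J) \<and>
     (\<forall>a\<in>J. \<forall>c\<in>fa. fmul c a \<in> J \<and> fmul a c \<in> J)"

definition rels :: "complex \<Rightarrow> complex \<Rightarrow> complex poly \<Rightarrow> falg set" where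
  "rels r s p = {fsub (word [H,U]) (fsmul r (word [U,H])),
                 fsub (word [D,H]) (fsmul r (word [H,D])),
                 fsub (fsub (word [D,U]) (fsmul s (word [U,D]))) (phiH p)}"

text \<open>The two-sided ideal generated by the relations (kernel of F -> L).\<close>
definition RelI :: "complex \<Rightarrow> complex \<Rightarrow> complex poly \<Rightarrow> falg set" where
  "RelI r s p = \<Inter>{J. is_ideal J \<and> rels r s p \<subseteq> J}"

definition wdeg :: "gen list \<Rightarrow> int" where
  "wdeg w = int (length (filter (\<lambda>g. g = U) w)) - int (length (filter (\<lambda>g. g = D) w))"

definition comp :: "int \<Rightarrow> falg \<Rightarrow> falg" where
  "comp i f = (\<lambda>w. if wdeg w = i then f w else 0)"

text \<open>Length of x in L: number of nonzero homogeneous components (nonzero in L).\<close>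
definition hlen :: "complex \<Rightarrow> complex \<Rightarrow> complex poly \<Rightarrow> falg \<Rightarrow> nat" where
  "hlen r s p x = card {i. comp i x \<notin> RelI r s p}"

end

theory Submission
  imports Defs
begin

(* Work in the free algebra F modulo an ideal I containing the defining
   relations; write a == b for a - b \<in> I.  Commuting h past a word of degree k costs
   the factor r^k: h w == r^k w h (induction on w, one relation per letter), hence
   h y == r^k y h for every homogeneous y of degree k.  The twisted commutator
   T_j(y) = h y - r^j y h therefore acts on the degree-k component of y, modulo I,
   as multiplication by (r^k - r^j) followed by right multiplication by h.
   Applying T_j for all degrees j \<noteq> i in the support of x (there are l(x) - 1 of
   them) turns x \<in> I into an element of I whose components of degree k \<noteq> i lie in I,
   while its degree-i component is == c x_i h^(l(x)-1) with c = prod (r^i - r^j) \<noteq> 0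
   because r is not a root of unity.  An element of I all of whose other components
   lie in I has its remaining component in I, which gives x_i h^(l(x)-1) \<in> I. *)

subsection \<open>Multiplication by words in the free algebra\<close>

lemma fmul_word_left:
  "fmul (word a) f v = (if take (length a) v = a then f (drop (length a) v) else 0)"
proof -
  have "fmul (word a) f v = (\<Sum>k\<le>length v. if k = length a then
          (if take (length a) v = a then f (drop (length a) v) else 0) else 0)"
    unfolding fmul_def word_def
    by (rule sum.cong[OF refl]) (auto dest: arg_cong[where f = length])
  also have "\<dots> = (if take (length a) v = a then f (drop (length a) v) else 0)"
    by (auto simp: sum.delta dest: arg_cong[where f = length])
  finally show ?thesis .
qed

lemma fmul_word_right:
  "fmul f (word b) v = (if length b \<le> length v \<and> drop (length v - length b) v = b
      then f (take (length v - length b) v) else 0)"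
proof -
  have "fmul f (word b) v = (\<Sum>k\<le>length v. if k = length v - length b then
          (if length b \<le> length v \<and> drop (length v - length b) v = b
           then f (take (length v - length b) v) else 0) else 0)"
    unfolding fmul_def word_def
    by (rule sum.cong[OF refl]) (auto dest: arg_cong[where f = length])
  also have "\<dots> = (if length b \<le> length v \<and> drop (length v - length b) v = b
                   then f (take (length v - length b) v) else 0)"
    by (auto simp: sum.delta)
  finally show ?thesis .
qed

lemma fmul_word_word: "fmul (word a) (word b) = word (a @ b)"
proof
  fix v
  have "v = a @ b \<longleftrightarrow> take (length a) v = a \<and> drop (length a) v = b"
    using append_eq_conv_conj[of a b v] by auto
  then show "fmul (word a) (word b) v = word (a @ b) v"
    by (simp only: fmul_word_left) (simp add: word_def)
qed

lemma fmul_word_Nil_left: "fmul (word []) f = f"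
  by (simp add: fun_eq_iff fmul_word_left)

lemma fmul_word_Nil_right: "fmul f (word []) = f"
  by (simp add: fun_eq_iff fmul_word_right)

lemma fmul_fsub_left: "fmul (fsub a b) c = fsub (fmul a c) (fmul b c)"
  by (simp add: fun_eq_iff fmul_def fsub_def sum_subtractf left_diff_distrib)

lemma fmul_fsub_right: "fmul c (fsub a b) = fsub (fmul c a) (fmul c b)"
  by (simp add: fun_eq_iff fmul_def fsub_def sum_subtractf right_diff_distrib)

lemma fmul_fsmul_left: "fmul (fsmul k a) c = fsmul k (fmul a c)"
  by (simp add: fun_eq_iff fmul_def fsmul_def sum_distrib_left mult.assoc)

lemma fmul_fsmul_right: "fmul c (fsmul k a) = fsmul k (fmul c a)"
  by (simp add: fun_eq_iff fmul_def fsmul_def sum_distrib_left mult.left_commute)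

lemma fsmul_fsmul: "fsmul a (fsmul b f) = fsmul (a * b) f"
  by (simp add: fun_eq_iff fsmul_def)

lemma fmul_sum_left:
  "fmul (\<lambda>v. \<Sum>w\<in>A. c w * g w v) e = (\<lambda>v. \<Sum>w\<in>A. c w * fmul (g w) e v)"
  unfolding fmul_def
  by (simp add: fun_eq_iff sum_distrib_left sum_distrib_right mult.assoc sum.swap[of _ A])

lemma fmul_sum_right:
  "fmul e (\<lambda>v. \<Sum>w\<in>A. c w * g w v) = (\<lambda>v. \<Sum>w\<in>A. c w * fmul e (g w) v)"
  unfolding fmul_def
  by (simp add: fun_eq_iff sum_distrib_left sum_distrib_right mult.left_commute sum.swap[of _ A])

lemma fa_decomp: "f \<in> fa \<Longrightarrow> f = (\<lambda>v. \<Sum>w\<in>{w. f w \<noteq> 0}. f w * word w v)"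
  unfolding fa_def word_def
  by (auto simp: fun_eq_iff if_distrib[of "\<lambda>x. _ * x"] sum.delta' cong: if_cong)

text \<open>Associativity in the cases needed below: a word factor on each side, and
  two word factors on the right.  Both follow from the basis case by linearity.\<close>

lemma fmul_word_assoc:
  assumes "f \<in> fa"
  shows "fmul (word a) (fmul f (word b)) = fmul (fmul (word a) f) (word b)"
  by (subst (1 2) fa_decomp[OF assms]) (simp add: fmul_sum_left fmul_sum_right fmul_word_word)

lemma fmul_word_assoc_right:
  assumes "f \<in> fa"
  shows "fmul (fmul f (word a)) (word b) = fmul f (word (a @ b))"
  by (subst (1 2) fa_decomp[OF assms]) (simp add: fmul_sum_left fmul_sum_right fmul_word_word)

subsection \<open>Ideals of the free algebra and congruence modulo an ideal\<close>

lemma word_fa: "word w \<in> fa"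
proof -
  have "{v. word w v \<noteq> 0} \<subseteq> {w}" by (auto simp: word_def)
  then show ?thesis unfolding fa_def by (auto intro: finite_subset)
qed

lemma hpow_fa: "hpow n \<in> fa"
  unfolding hpow_def by (rule word_fa)

lemma fsmul_word_fa: "fsmul c (word w) \<in> fa"
proof -
  have "{v. fsmul c (word w) v \<noteq> 0} \<subseteq> {w}" by (auto simp: word_def fsmul_def)
  then show ?thesis unfolding fa_def by (auto intro: finite_subset)
qed

definition ideal_cong :: "falg set \<Rightarrow> falg \<Rightarrow> falg \<Rightarrow> bool" where
  "ideal_cong I a b \<longleftrightarrow> fsub a b \<in> I"

context
  fixes I :: "falg set"
  assumes idl: "is_ideal I"
begin

lemma ideal_fa: "a \<in> I \<Longrightarrow> a \<in> fa"
  using idl unfolding is_ideal_def by blast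

lemma ideal_zero: "(\<lambda>_. 0) \<in> I"
  using idl unfolding is_ideal_def by blast

lemma ideal_add: "a \<in> I \<Longrightarrow> b \<in> I \<Longrightarrow> fadd a b \<in> I"
  using idl unfolding is_ideal_def by blast

lemma ideal_mult_left: "a \<in> I \<Longrightarrow> c \<in> fa \<Longrightarrow> fmul c a \<in> I"
  using idl unfolding is_ideal_def by blast

lemma ideal_mult_right: "a \<in> I \<Longrightarrow> c \<in> fa \<Longrightarrow> fmul a c \<in> I"
  using idl unfolding is_ideal_def by blast

text \<open>Scalars are multiples of the empty word, so ideals are subspaces.\<close>

lemma ideal_smult: "a \<in> I \<Longrightarrow> fsmul c a \<in> I"
  using ideal_mult_left[OF _ fsmul_word_fa, of a c "[]"]
  by (simp add: fmul_fsmul_left fmul_word_Nil_left)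

lemma ideal_sub: "a \<in> I \<Longrightarrow> b \<in> I \<Longrightarrow> fsub a b \<in> I"
  using ideal_add[OF _ ideal_smult, of a b "-1"]
  by (simp add: fadd_def fsmul_def fsub_def)

lemma ideal_smult_cancel:
  assumes "c \<noteq> 0" and "fsmul c a \<in> I"
  shows "a \<in> I"
proof -
  have "fsmul (inverse c) (fsmul c a) = a"
    using assms(1) by (simp add: fsmul_def fun_eq_iff)
  then show ?thesis using ideal_smult[OF assms(2)] by metis
qed

lemma ideal_sum: "finite A \<Longrightarrow> (\<And>w. w \<in> A \<Longrightarrow> g w \<in> I) \<Longrightarrow> (\<lambda>v. \<Sum>w\<in>A. c w * g w v) \<in> I"
proof (induction A rule: finite_induct)
  case empty
  then show ?case using ideal_zero by simp
next
  case (insert a A)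
  then have "fadd (fsmul (c a) (g a)) (\<lambda>v. \<Sum>w\<in>A. c w * g w v) \<in> I"
    by (intro ideal_add ideal_smult) auto
  then show ?case using insert by (simp add: fadd_def fsmul_def)
qed

lemma cong_refl: "ideal_cong I a a"
  using ideal_zero by (simp add: ideal_cong_def fsub_def)

lemma cong_trans: "ideal_cong I a b \<Longrightarrow> ideal_cong I b c \<Longrightarrow> ideal_cong I a c"
  using ideal_add unfolding ideal_cong_def by (fastforce simp: fadd_def fsub_def)

lemma cong_mem_iff: "ideal_cong I a b \<Longrightarrow> a \<in> I \<longleftrightarrow> b \<in> I"
  unfolding ideal_cong_def
  using ideal_sub ideal_add by (fastforce simp: fadd_def fsub_def)

lemma cong_fsub:
  "ideal_cong I a a' \<Longrightarrow> ideal_cong I b b' \<Longrightarrow> ideal_cong I (fsub a b) (fsub a' b')"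
  using ideal_sub unfolding ideal_cong_def by (fastforce simp: fsub_def algebra_simps)

lemma cong_smult: "ideal_cong I a b \<Longrightarrow> ideal_cong I (fsmul c a) (fsmul c b)"
  using ideal_smult unfolding ideal_cong_def by (fastforce simp: fsmul_def fsub_def algebra_simps)

lemma cong_mult_left: "c \<in> fa \<Longrightarrow> ideal_cong I a b \<Longrightarrow> ideal_cong I (fmul c a) (fmul c b)"
  unfolding ideal_cong_def by (metis ideal_mult_left fmul_fsub_right)

lemma cong_mult_right: "c \<in> fa \<Longrightarrow> ideal_cong I a b \<Longrightarrow> ideal_cong I (fmul a c) (fmul b c)"
  unfolding ideal_cong_def by (metis ideal_mult_right fmul_fsub_left)

lemma cong_sum:
  assumes "finite A" and "\<And>w. w \<in> A \<Longrightarrow> ideal_cong I (a w) (b w)"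
  shows "ideal_cong I (\<lambda>v. \<Sum>w\<in>A. c w * a w v) (\<lambda>v. \<Sum>w\<in>A. c w * b w v)"
  using ideal_sum[OF assms(1), of "\<lambda>w. fsub (a w) (b w)" c] assms(2)
  by (simp add: ideal_cong_def fsub_def sum_subtractf right_diff_distrib)

end

subsection \<open>Degrees and homogeneous components\<close>

lemma wdeg_append [simp]: "wdeg (a @ b) = wdeg a + wdeg b"
  by (simp add: wdeg_def)

lemma wdeg_split: "wdeg v = wdeg (take n v) + wdeg (drop n v)"
  by (metis append_take_drop_id wdeg_append)

definition homogeneous :: "int \<Rightarrow> falg \<Rightarrow> bool" where
  "homogeneous k f \<longleftrightarrow> (\<forall>w. f w \<noteq> 0 \<longrightarrow> wdeg w = k)"

lemma homogeneous_comp: "homogeneous k (comp k f)"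
  by (simp add: homogeneous_def comp_def)

lemma comp_fa: "f \<in> fa \<Longrightarrow> comp k f \<in> fa"
  unfolding fa_def comp_def by (auto elim: rev_finite_subset)

lemma comp_fsub: "comp k (fsub a b) = fsub (comp k a) (comp k b)"
  by (simp add: fun_eq_iff comp_def fsub_def)

lemma comp_fsmul: "comp k (fsmul c a) = fsmul c (comp k a)"
  by (simp add: fun_eq_iff comp_def fsmul_def)

lemma comp_fmul_word_left: "wdeg a = 0 \<Longrightarrow> comp k (fmul (word a) f) = fmul (word a) (comp k f)"
  by (auto simp: fun_eq_iff comp_def fmul_word_left) (metis wdeg_split add_0)+

lemma comp_fmul_word_right: "wdeg b = 0 \<Longrightarrow> comp k (fmul f (word b)) = fmul (comp k f) (word b)"
  by (auto simp: fun_eq_iff comp_def fmul_word_right) (metis wdeg_split add_0_right)+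

lemma finite_nonzero_comps:
  assumes "f \<in> fa"
  shows "finite {k. comp k f \<noteq> (\<lambda>_. 0)}"
proof -
  have "{k. comp k f \<noteq> (\<lambda>_. 0)} \<subseteq> wdeg ` {w. f w \<noteq> 0}"
    by (auto simp: comp_def fun_eq_iff split: if_splits)
  then show ?thesis using assms by (auto simp: fa_def intro: finite_surj)
qed

lemma ideal_comp_from_others:
  assumes idl: "is_ideal I" and f: "f \<in> I" and others: "\<And>k. k \<noteq> i \<Longrightarrow> comp k f \<in> I"
  shows "comp i f \<in> I"
proof -
  define rest where "rest K = (\<lambda>w. if wdeg w \<in> K then f w else 0)" for K
  have rest_in: "rest K \<in> I" if "finite K" "i \<notin> K" for K
    using that
  proof (induction K rule: finite_induct)
    case empty
    then show ?case using ideal_zero[OF idl] by (simp add: rest_def)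
  next
    case (insert a K)
    then have "fadd (comp a f) (rest K) \<in> I"
      by (intro ideal_add[OF idl] others) auto
    moreover have "fadd (comp a f) (rest K) = rest (insert a K)"
      using insert by (auto simp: fun_eq_iff fadd_def comp_def rest_def)
    ultimately show ?case by simp
  qed
  define K where "K = wdeg ` {w. f w \<noteq> 0} - {i}"
  have "finite K" using ideal_fa[OF idl f] by (simp add: K_def fa_def)
  then have "fsub f (rest K) \<in> I"
    using rest_in ideal_sub[OF idl f] by (simp add: K_def)
  moreover have "fsub f (rest K) = comp i f"
    by (auto simp: fun_eq_iff fsub_def comp_def K_def rest_def)
  ultimately show ?thesis by simp
qed

subsection \<open>Twisted commutators with h\<close>

definition hcomm :: "complex \<Rightarrow> int \<Rightarrow> falg \<Rightarrow> falg" where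
  "hcomm r j y = fsub (fmul (word [H]) y) (fsmul (r powi j) (fmul y (word [H])))"

fun hcomms :: "complex \<Rightarrow> int list \<Rightarrow> falg \<Rightarrow> falg" where
  "hcomms r [] y = y"
| "hcomms r (j # js) y = hcomm r j (hcomms r js y)"

definition hcomm_coeff :: "complex \<Rightarrow> int list \<Rightarrow> int \<Rightarrow> complex" where
  "hcomm_coeff r js k = (\<Prod>j\<leftarrow>js. r powi k - r powi j)"

lemma hcomm_in_ideal: "is_ideal I \<Longrightarrow> y \<in> I \<Longrightarrow> hcomm r j y \<in> I"
  unfolding hcomm_def
  by (intro ideal_sub ideal_smult ideal_mult_left[OF _ _ word_fa] ideal_mult_right[OF _ _ word_fa])

lemma hcomms_in_ideal: "is_ideal I \<Longrightarrow> y \<in> I \<Longrightarrow> hcomms r js y \<in> I"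
  by (induction js) (simp_all add: hcomm_in_ideal)

lemma comp_hcomm: "comp k (hcomm r j y) = hcomm r j (comp k y)"
  by (simp add: hcomm_def comp_fsub comp_fsmul comp_fmul_word_left comp_fmul_word_right wdeg_def)

lemma hcomm_fsmul: "hcomm r j (fsmul c y) = fsmul c (hcomm r j y)"
  unfolding hcomm_def fmul_fsmul_left fmul_fsmul_right
  by (simp add: fun_eq_iff fsub_def fsmul_def algebra_simps)

lemma cong_hcomm: "is_ideal I \<Longrightarrow> ideal_cong I a b \<Longrightarrow> ideal_cong I (hcomm r j a) (hcomm r j b)"
  unfolding hcomm_def by (intro cong_fsub cong_smult cong_mult_left cong_mult_right word_fa)

subsection \<open>Consequences of the relations: commuting h past homogeneous elements\<close>

context
  fixes I :: "falg set" and r s :: complex and p :: "complex poly"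
  assumes idl: "is_ideal I" and rels_in: "rels r s p \<subseteq> I" and r0: "r \<noteq> 0"
begin

lemmas cong_trans_in_ideal [trans] = cong_trans[OF idl]

text \<open>One letter: hu == r uh and hd == r^-1 dh by the relations, and hh = hh.\<close>

lemma swap_h_letter:
  "ideal_cong I (word (H # g # w)) (fsmul (r powi wdeg [g]) (word (g # H # w)))"
proof (cases g)
  case U
  have "fsub (word [H,U]) (fsmul r (word [U,H])) \<in> I"
    using rels_in by (simp add: rels_def)
  then have "fmul (fsub (word [H,U]) (fsmul r (word [U,H]))) (word w) \<in> I"
    by (rule ideal_mult_right[OF idl _ word_fa])
  then show ?thesis
    using U by (simp add: ideal_cong_def fmul_fsub_left fmul_fsmul_left fmul_word_word wdeg_def)
next
  case D
  have "fsub (word [D,H]) (fsmul r (word [H,D])) \<in> I"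
    using rels_in by (simp add: rels_def)
  then have "fsmul (- inverse r) (fmul (fsub (word [D,H]) (fsmul r (word [H,D]))) (word w)) \<in> I"
    by (intro ideal_smult[OF idl] ideal_mult_right[OF idl] word_fa)
  moreover have "fsmul (- inverse r) (fmul (fsub (word [D,H]) (fsmul r (word [H,D]))) (word w))
      = fsub (word (H # g # w)) (fsmul (r powi wdeg [g]) (word (g # H # w)))"
    using D r0 unfolding fmul_fsub_left fmul_fsmul_left fmul_word_word
    by (simp add: wdeg_def fun_eq_iff fsub_def fsmul_def power_int_minus field_simps)
  ultimately show ?thesis by (simp add: ideal_cong_def)
next
  case H
  then show ?thesis using cong_refl[OF idl] by (simp add: fsmul_def wdeg_def)
qed

lemma swap_h_word: "ideal_cong I (word (H # w)) (fsmul (r powi wdeg w) (word (w @ [H])))"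
proof (induction w)
  case Nil
  then show ?case using cong_refl[OF idl] by (simp add: fsmul_def wdeg_def)
next
  case (Cons g w)
  have "ideal_cong I (word (H # g # w)) (fsmul (r powi wdeg [g]) (word (g # H # w)))"
    by (rule swap_h_letter)
  also have "ideal_cong I (fsmul (r powi wdeg [g]) (word (g # H # w)))
      (fsmul (r powi wdeg [g]) (fmul (word [g]) (fsmul (r powi wdeg w) (word (w @ [H])))))"
    using cong_mult_left[OF idl word_fa Cons.IH, of "[g]"]
    by (intro cong_smult[OF idl]) (simp add: fmul_word_word)
  also have "\<dots> = fsmul (r powi wdeg (g # w)) (word ((g # w) @ [H]))"
    using r0 wdeg_append[of "[g]" w]
    by (simp add: fmul_fsmul_right fmul_word_word fsmul_fsmul power_int_add)
  finally show ?case .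
qed

lemma swap_h_homogeneous:
  assumes f: "f \<in> fa" and hom: "homogeneous k f"
  shows "ideal_cong I (fmul (word [H]) f) (fsmul (r powi k) (fmul f (word [H])))"
proof -
  define A where "A = {w. f w \<noteq> 0}"
  have "finite A" using f by (simp add: A_def fa_def)
  then have "ideal_cong I (\<lambda>v. \<Sum>w\<in>A. f w * word (H # w) v)
      (\<lambda>v. \<Sum>w\<in>A. f w * fsmul (r powi wdeg w) (word (w @ [H])) v)"
    by (rule cong_sum[OF idl _ swap_h_word])
  moreover have "fmul (word [H]) f = (\<lambda>v. \<Sum>w\<in>A. f w * word (H # w) v)"
    by (subst fa_decomp[OF f]) (simp add: A_def fmul_sum_right fmul_word_word)
  moreover have "fsmul (r powi k) (fmul f (word [H]))
      = (\<lambda>v. \<Sum>w\<in>A. f w * fsmul (r powi wdeg w) (word (w @ [H])) v)"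
    using hom
    by (subst fa_decomp[OF f])
      (auto simp: A_def homogeneous_def fmul_sum_left fmul_word_word fsmul_def
        sum_distrib_left mult.left_commute intro!: sum.cong)
  ultimately show ?thesis by simp
qed

lemma hcomm_homogeneous:
  assumes f: "f \<in> fa" and hom: "homogeneous k f"
  shows "ideal_cong I (hcomm r j (fmul f (hpow m)))
           (fsmul (r powi k - r powi j) (fmul f (hpow (Suc m))))"
proof -
  have hpow_Suc: "[H] @ replicate m H = replicate (Suc m) H" "replicate m H @ [H] = replicate (Suc m) H"
    by (simp_all add: replicate_append_same)
  have "ideal_cong I (fmul (word [H]) (fmul f (hpow m)))
      (fmul (fsmul (r powi k) (fmul f (word [H]))) (hpow m))"
    using cong_mult_right[OF idl hpow_fa swap_h_homogeneous[OF f hom]]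
    by (simp add: hpow_def fmul_word_assoc[OF f])
  also have "\<dots> = fsmul (r powi k) (fmul f (hpow (Suc m)))"
    by (simp add: hpow_def fmul_fsmul_left fmul_word_assoc_right[OF f] hpow_Suc)
  finally have left: "ideal_cong I (fmul (word [H]) (fmul f (hpow m)))
      (fsmul (r powi k) (fmul f (hpow (Suc m))))" .
  have right: "fmul (fmul f (hpow m)) (word [H]) = fmul f (hpow (Suc m))"
    by (simp add: hpow_def fmul_word_assoc_right[OF f] hpow_Suc)
  have "ideal_cong I (hcomm r j (fmul f (hpow m)))
      (fsub (fsmul (r powi k) (fmul f (hpow (Suc m)))) (fsmul (r powi j) (fmul f (hpow (Suc m)))))"
    unfolding hcomm_def right by (intro cong_fsub[OF idl left] cong_refl[OF idl])
  then show ?thesis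
    by (simp add: fun_eq_iff fsub_def fsmul_def left_diff_distrib)
qed

lemma comp_hcomms:
  assumes y: "y \<in> fa"
  shows "ideal_cong I (comp k (hcomms r js y))
           (fsmul (hcomm_coeff r js k) (fmul (comp k y) (hpow (length js))))"
proof (induction js)
  case Nil
  then show ?case
    using cong_refl[OF idl] by (simp add: hcomm_coeff_def hpow_def fmul_word_Nil_right fsmul_def)
next
  case (Cons j js)
  let ?c = "hcomm_coeff r js k" and ?yk = "comp k y"
  have "ideal_cong I (comp k (hcomms r (j # js) y))
      (hcomm r j (fsmul ?c (fmul ?yk (hpow (length js)))))"
    using cong_hcomm[OF idl Cons.IH] by (simp add: comp_hcomm)
  also have "\<dots> = fsmul ?c (hcomm r j (fmul ?yk (hpow (length js))))"
    by (rule hcomm_fsmul)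
  also have "ideal_cong I \<dots> (fsmul ?c (fsmul (r powi k - r powi j) (fmul ?yk (hpow (Suc (length js))))))"
    by (intro cong_smult[OF idl] hcomm_homogeneous comp_fa y homogeneous_comp)
  also have "\<dots> = fsmul (hcomm_coeff r (j # js) k) (fmul ?yk (hpow (length (j # js))))"
    by (simp add: fsmul_fsmul hcomm_coeff_def mult.commute)
  finally show ?case .
qed

lemma isolate_component:
  assumes y: "y \<in> I" and js: "\<And>k. k \<noteq> i \<Longrightarrow> comp k y \<notin> I \<Longrightarrow> k \<in> set js"
  shows "fsmul (hcomm_coeff r js i) (fmul (comp i y) (hpow (length js))) \<in> I"
proof -
  let ?z = "hcomms r js y"
  have cong: "ideal_cong I (comp k ?z) (fsmul (hcomm_coeff r js k) (fmul (comp k y) (hpow (length js))))"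
    for k by (rule comp_hcomms[OF ideal_fa[OF idl y]])
  have "comp k ?z \<in> I" if "k \<noteq> i" for k
  proof (cases "comp k y \<in> I")
    case True
    then have "fsmul (hcomm_coeff r js k) (fmul (comp k y) (hpow (length js))) \<in> I"
      by (intro ideal_smult[OF idl] ideal_mult_right[OF idl _ hpow_fa])
    then show ?thesis using cong_mem_iff[OF idl cong[of k]] by blast
  next
    case False
    then have "hcomm_coeff r js k = 0"
      using js[OF that] by (auto simp: hcomm_coeff_def prod_list_zero_iff image_iff)
    then have "fsmul (hcomm_coeff r js k) (fmul (comp k y) (hpow (length js))) = (\<lambda>_. 0)"
      by (simp add: fsmul_def)
    then show ?thesis using cong_mem_iff[OF idl cong[of k]] ideal_zero[OF idl] by simp
  qed
  then have "comp i ?z \<in> I"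
    by (rule ideal_comp_from_others[OF idl hcomms_in_ideal[OF idl y]])
  then show ?thesis using cong_mem_iff[OF idl cong[of i]] by blast
qed

end

lemma powi_inj:
  fixes r :: complex
  assumes r0: "r \<noteq> 0" and not_root: "\<forall>n::nat. n > 0 \<longrightarrow> r ^ n \<noteq> 1"
    and eq: "r powi a = r powi b"
  shows "a = b"
proof (rule ccontr)
  assume "a \<noteq> b"
  define n where "n = nat \<bar>a - b\<bar>"
  have "n > 0" using \<open>a \<noteq> b\<close> by (simp add: n_def)
  have ab: "r powi (a - b) = 1" using eq r0 by (simp add: power_int_diff)
  then have "r powi (b - a) = 1"
    by (metis minus_diff_eq power_int_minus inverse_1)
  then have "r powi int n = 1"
    using ab by (cases "a - b \<ge> 0") (simp_all add: n_def)
  then show False using not_root \<open>n > 0\<close> by (simp add: power_int_of_nat)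
qed

lemma hcomm_coeff_nonzero:
  fixes r :: complex
  assumes "r \<noteq> 0" and "\<forall>n::nat. n > 0 \<longrightarrow> r ^ n \<noteq> 1" and "i \<notin> set js"
  shows "hcomm_coeff r js i \<noteq> 0"
  using assms(3) by (auto simp: hcomm_coeff_def prod_list_zero_iff dest: powi_inj[OF assms(1,2)])

text \<open>The support S of x in L (degrees whose component is not in RelI) is finite and
  has l(x) elements; for i \<in> S isolate the degree-i component using js = S - {i} and
  divide by the nonzero coefficient.\<close>

theorem mainTheorem9:
  fixes r s :: complex and \<phi> :: "complex poly" and I :: "falg set" and x :: falg
  assumes "r \<noteq> 0" and "s \<noteq> 0"
    and "\<forall>n::nat. n > 0 \<longrightarrow> r ^ n \<noteq> 1"
    and "is_ideal I" and "RelI r s \<phi> \<subseteq> I"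
    and "x \<in> I"
    and "hlen r s \<phi> x \<ge> 1"
  shows "\<forall>i::int. fmul (comp i x) (hpow (hlen r s \<phi> x - 1)) \<in> I"
proof
  fix i :: int
  note r0 = assms(1) and not_root = assms(3) and idl = assms(4) and RelI_sub = assms(5)
    and x = assms(6)
  have rels_in: "rels r s \<phi> \<subseteq> I" using RelI_sub by (auto simp: RelI_def)
  define S where "S = {k. comp k x \<notin> RelI r s \<phi>}"
  have "S \<subseteq> {k. comp k x \<noteq> (\<lambda>_. 0)}"
    by (auto simp: S_def RelI_def is_ideal_def)
  then have "finite S" using finite_nonzero_comps[OF ideal_fa[OF idl x]] by (rule finite_subset)
  show "fmul (comp i x) (hpow (hlen r s \<phi> x - 1)) \<in> I"
  proof (cases "i \<in> S")
    case False
    then show ?thesis using RelI_sub by (auto simp: S_def intro: ideal_mult_right[OF idl _ hpow_fa])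
  next
    case True
    define js where "js = sorted_list_of_set (S - {i})"
    have set_js: "set js = S - {i}" and len_js: "length js = hlen r s \<phi> x - 1"
      using \<open>finite S\<close> True by (simp_all add: js_def hlen_def S_def[symmetric])
    have "fsmul (hcomm_coeff r js i) (fmul (comp i x) (hpow (length js))) \<in> I"
      using RelI_sub by (intro isolate_component[OF idl rels_in r0 x]) (auto simp: set_js S_def)
    moreover have "hcomm_coeff r js i \<noteq> 0"
      using r0 not_root set_js by (intro hcomm_coeff_nonzero) auto
    ultimately show ?thesis by (simp add: ideal_smult_cancel[OF idl] len_js)
  qed
qed

end
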